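(* Let $P\in\{0,1\}^{k\times\ell}$ be a pattern with a row $r$ and two columns $c_1<c_2$ such that all 1-entries of $P$ in row $r$ lie in $\{r\}\times[c_1,c_2]$, and for every column $c$ with $c_1<c<c_2$, $P$ has no 1-entry in column $c$ except possibly $(r,c)$. Suppose moreover $P$ satisfies one of: Type 1: all 1-entries of $P$ above row $r$ lie in a single row $r_1<r$, and all 1-entries below row $r$ lie in a single row $r_2>r$; Type 2: all 1-entries above row $r$ lie in a single row $r_1<r$, and all 1-entries below row $r$ lie in $P[(r,k]\times[c_2,\ell]]$; Type 3: all 1-entries above row $r$ lie in $P[[1,r)\times[c_1]]$, and all 1-entries below row $r$ lie in $P[(r,k]\times[c_2,\ell]]$. Then every 1-entry of $P$ in $\{r\}\times[c_1,c_2]$ is row-bounding.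
   Context: All matrices are binary; rows numbered top to bottom, columns left to right; $(i,j)$ is the entry in row $i$, column $j$; $[a,b]=\{a,\dots,b\}$, $[a,b)=[a,b-1]$, $(a,b]=[a+1,b]$, $[n]=[1,n]$; $P[R\times C]$ is the submatrix on rows $R$ and columns $C$. $M\Delta f$ is $M$ with the value of entry $f$ switched. An embedding of $P\in\{0,1\}^{k\times\ell}$ into $M\in\{0,1\}^{m\times n}$ is a map $\phi:[k]\times[\ell]\to[m]\times[n]$ sending 1-entries to 1-entries such that if $e_1=(i_1,j_1)$, $e_2=(i_2,j_2)$ map to $(i_1^*,j_1^* )$, $(i_2^*,j_2^* )$, then $i_1<i_2\Rightarrow i_1^*<i_2^*$ and $j_1<j_2\Rightarrow j_1^*<j_2^*$. $M$ avoids $P$ if no embedding exists; $\mathrm{Av}(P)$ is the set of $P$-avoiding matrices. For a 1-entry $e$ of $P$ and $M\in\mathrm{Av}(P)$, a 0-entry $f$ of $M$ is critical for $e$ if some embedding of $P$ into $M\Delta f$ maps $e$ to $f$; a horizontal 0-run (maximal run of consecutive 0-entries in a row) is critical for $e$ if it contains a 0-entry critical for $e$. $e$ is row-bounding if there is a constant $K$ such that for every $M\in\mathrm{Av}(P)$ every row of $M$ contains at most $K$ horizontal 0-runs critical for $e$. *)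

theory Defs
  imports Main
begin

text \<open>A binary matrix with m rows and n columns is represented by its dimensions
together with a predicate A :: nat => nat => bool, where A i j means that entry (i,j)
(1-based, i in [1,m], j in [1,n]) is a 1-entry. Values outside the range are irrelevant.\<close>

type_synonym bmat = "nat \<Rightarrow> nat \<Rightarrow> bool"

definition cells :: "nat \<Rightarrow> nat \<Rightarrow> (nat \<times> nat) set" where
  "cells m n = {1..m} \<times> {1..n}"

definition is_embedding ::
  "bmat \<Rightarrow> nat \<Rightarrow> nat \<Rightarrow> bmat \<Rightarrow> nat \<Rightarrow> nat \<Rightarrow> (nat \<times> nat \<Rightarrow> nat \<times> nat) \<Rightarrow> bool" where
  "is_embedding P k l M m n \<phi> \<longleftrightarrow>
     (\<forall>e\<in>cells k l. \<phi> e \<in> cells m n) \<and>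
     (\<forall>(i,j)\<in>cells k l. P i j \<longrightarrow> M (fst (\<phi> (i,j))) (snd (\<phi> (i,j)))) \<and>
     (\<forall>e1\<in>cells k l. \<forall>e2\<in>cells k l. fst e1 < fst e2 \<longrightarrow> fst (\<phi> e1) < fst (\<phi> e2)) \<and>
     (\<forall>e1\<in>cells k l. \<forall>e2\<in>cells k l. snd e1 < snd e2 \<longrightarrow> snd (\<phi> e1) < snd (\<phi> e2))"

definition avoids :: "bmat \<Rightarrow> nat \<Rightarrow> nat \<Rightarrow> bmat \<Rightarrow> nat \<Rightarrow> nat \<Rightarrow> bool" where
  "avoids P k l M m n \<longleftrightarrow> \<not> (\<exists>\<phi>. is_embedding P k l M m n \<phi>)"

definition flip :: "bmat \<Rightarrow> nat \<times> nat \<Rightarrow> bmat" where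
  "flip M f = (\<lambda>i j. if (i, j) = f then \<not> M i j else M i j)"

definition critical ::
  "bmat \<Rightarrow> nat \<Rightarrow> nat \<Rightarrow> nat \<times> nat \<Rightarrow> bmat \<Rightarrow> nat \<Rightarrow> nat \<Rightarrow> nat \<times> nat \<Rightarrow> bool" where
  "critical P k l e M m n f \<longleftrightarrow>
     f \<in> cells m n \<and> \<not> M (fst f) (snd f) \<and>
     (\<exists>\<phi>. is_embedding P k l (flip M f) m n \<phi> \<and> \<phi> e = f)"

definition zero_run :: "bmat \<Rightarrow> nat \<Rightarrow> nat \<Rightarrow> nat \<Rightarrow> nat \<Rightarrow> nat \<Rightarrow> bool" where
  "zero_run M m n i a b \<longleftrightarrow>
     1 \<le> i \<and> i \<le> m \<and> 1 \<le> a \<and> a \<le> b \<and> b \<le> n \<and>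
     (\<forall>j\<in>{a..b}. \<not> M i j) \<and>
     (a = 1 \<or> M i (a - 1)) \<and> (b = n \<or> M i (b + 1))"

definition critical_runs ::
  "bmat \<Rightarrow> nat \<Rightarrow> nat \<Rightarrow> nat \<times> nat \<Rightarrow> bmat \<Rightarrow> nat \<Rightarrow> nat \<Rightarrow> nat \<Rightarrow> (nat \<times> nat) set" where
  "critical_runs P k l e M m n i =
     {(a, b). zero_run M m n i a b \<and> (\<exists>j\<in>{a..b}. critical P k l e M m n (i, j))}"

definition row_bounding :: "bmat \<Rightarrow> nat \<Rightarrow> nat \<Rightarrow> nat \<times> nat \<Rightarrow> bool" where
  "row_bounding P k l e \<longleftrightarrow>
     (\<exists>K::nat. \<forall>M m n. avoids P k l M m n \<longrightarrow>
        (\<forall>i\<in>{1..m}. card (critical_runs P k l e M m n i) \<le> K))"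

end

theory Submission
  imports Defs
begin

(* Suppose row i of a P-avoiding matrix M contained more than c2 - c1 + 1 zero-runs critical
   for e = (r,j0). Take critical entries xs in the leftmost and xt in the rightmost of them:
   every run but the last is followed by a 1-entry, so at least c2 - c1 + 1 one-entries lie
   between xs and xt. Let \<phi>s and \<phi>t embed P into M with xs resp. xt switched, sending e
   there. Moving e onto one of these 1-entries would embed P into M, so all columns of \<phi>s up
   to j0 lie left of them and all columns of \<phi>t from j0 on lie right of them. Now glue: row r
   goes to c2 - c1 + 1 of these 1-entries, columns left of c1 follow \<phi>s, columns right of c2
   follow \<phi>t; the columns strictly between carry no other 1-entries, and the shape of the rows
   above and below r lets their images be chosen consistently from \<phi>s and \<phi>t. This embeds
   P into M, a contradiction. *)

definition rows_increasing :: "(nat \<times> nat) set \<Rightarrow> (nat \<times> nat \<Rightarrow> nat) \<Rightarrow> bool" where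
  "rows_increasing C f \<longleftrightarrow> (\<forall>e\<in>C. \<forall>e'\<in>C. fst e < fst e' \<longrightarrow> f e < f e')"

definition cols_increasing :: "(nat \<times> nat) set \<Rightarrow> (nat \<times> nat \<Rightarrow> nat) \<Rightarrow> bool" where
  "cols_increasing C f \<longleftrightarrow> (\<forall>e\<in>C. \<forall>e'\<in>C. snd e < snd e' \<longrightarrow> f e < f e')"

lemma rows_increasingD: "rows_increasing C f \<Longrightarrow> e \<in> C \<Longrightarrow> e' \<in> C \<Longrightarrow> fst e < fst e' \<Longrightarrow> f e < f e'"
  by (simp add: rows_increasing_def)

lemma cols_increasingD: "cols_increasing C f \<Longrightarrow> e \<in> C \<Longrightarrow> e' \<in> C \<Longrightarrow> snd e < snd e' \<Longrightarrow> f e < f e'"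
  by (simp add: cols_increasing_def)

lemma rows_increasing_subset: "rows_increasing C f \<Longrightarrow> D \<subseteq> C \<Longrightarrow> rows_increasing D f"
  by (auto simp: rows_increasing_def)

lemma is_embedding_iff:
  "is_embedding P k l M m n \<phi> \<longleftrightarrow>
     \<phi> ` cells k l \<subseteq> cells m n \<and>
     (\<forall>(a,b)\<in>cells k l. P a b \<longrightarrow> M (fst (\<phi> (a,b))) (snd (\<phi> (a,b)))) \<and>
     rows_increasing (cells k l) (\<lambda>e. fst (\<phi> e)) \<and> cols_increasing (cells k l) (\<lambda>e. snd (\<phi> e))"
  by (auto simp: is_embedding_def rows_increasing_def cols_increasing_def)

lemma embedding_inj_on:
  assumes "is_embedding P k l M m n \<phi>"
  shows "inj_on \<phi> (cells k l)"
proof (rule inj_onI)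
  fix e e' assume "e \<in> cells k l" "e' \<in> cells k l" "\<phi> e = \<phi> e'"
  with assms show "e = e'"
    unfolding is_embedding_def by (metis less_irrefl linorder_neqE_nat prod.expand)
qed

lemma embedding_flip_one:
  assumes emb: "is_embedding P k l (flip M f) m n \<phi>" and "\<phi> e = f" "e \<in> cells k l"
    and "(a,b) \<in> cells k l" "(a,b) \<noteq> e" "P a b"
  shows "M (fst (\<phi> (a,b))) (snd (\<phi> (a,b)))"
proof -
  have "\<phi> (a,b) \<noteq> f"
    using embedding_inj_on[OF emb] assms(2-5) by (metis inj_on_eq_iff)
  moreover have "flip M f (fst (\<phi> (a,b))) (snd (\<phi> (a,b)))"
    using emb assms(4,6) unfolding is_embedding_def by auto
  ultimately show ?thesis
    by (simp add: flip_def)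
qed

lemma embedding_move_entry:
  assumes emb: "is_embedding P k l (flip M (i,x)) m n \<phi>" and \<phi>e: "\<phi> e = (i,x)" and e: "e \<in> cells k l"
    and y: "M i y" "y \<in> {1..n}"
    and left: "\<And>e'. e' \<in> cells k l \<Longrightarrow> snd e' < snd e \<Longrightarrow> snd (\<phi> e') < y"
    and right: "\<And>e'. e' \<in> cells k l \<Longrightarrow> snd e < snd e' \<Longrightarrow> y < snd (\<phi> e')"
  shows "is_embedding P k l M m n (\<phi>(e := (i,y)))"
  unfolding is_embedding_iff
proof (intro conjI)
  have range: "\<phi> ` cells k l \<subseteq> cells m n"
    using emb by (simp add: is_embedding_iff)
  then have "(i,y) \<in> cells m n"
    using e \<phi>e y(2) by (force simp: cells_def)
  with range show "(\<phi>(e := (i,y))) ` cells k l \<subseteq> cells m n"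
    by (auto simp: image_subset_iff)
  show "\<forall>(a,b)\<in>cells k l. P a b \<longrightarrow> M (fst ((\<phi>(e := (i,y))) (a,b))) (snd ((\<phi>(e := (i,y))) (a,b)))"
    using embedding_flip_one[OF emb \<phi>e e] y by auto
  have "(\<lambda>e'. fst ((\<phi>(e := (i,y))) e')) = (\<lambda>e'. fst (\<phi> e'))"
    using \<phi>e by auto
  then show "rows_increasing (cells k l) (\<lambda>e'. fst ((\<phi>(e := (i,y))) e'))"
    using emb by (simp add: is_embedding_iff)
  have "cols_increasing (cells k l) (\<lambda>e'. snd (\<phi> e'))"
    using emb by (simp add: is_embedding_iff)
  then show "cols_increasing (cells k l) (\<lambda>e'. snd ((\<phi>(e := (i,y))) e'))"
    using left right unfolding cols_increasing_def by auto
qed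

lemma critical_embedding_left_of_one:
  assumes av: "avoids P k l M m n"
    and emb: "is_embedding P k l (flip M (i,x)) m n \<phi>" and \<phi>e: "\<phi> e = (i,x)" and e: "e \<in> cells k l"
    and y: "M i y" "y \<in> {1..n}" "x < y"
    and e': "e' \<in> cells k l" "snd e' \<le> snd e"
  shows "snd (\<phi> e') < y"
proof (rule ccontr)
  assume "\<not> snd (\<phi> e') < y"
  have "is_embedding P k l M m n (\<phi>(e := (i,y)))"
  proof (rule embedding_move_entry[OF emb \<phi>e e y(1,2)])
    fix e'' assume "e'' \<in> cells k l" "snd e'' < snd e"
    then show "snd (\<phi> e'') < y"
      using emb e \<phi>e y(3) unfolding is_embedding_def by fastforce
  next
    fix e'' assume "e'' \<in> cells k l" "snd e < snd e''"
    then have "snd (\<phi> e') < snd (\<phi> e'')"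
      using emb e' unfolding is_embedding_def by force
    with \<open>\<not> snd (\<phi> e') < y\<close> show "y < snd (\<phi> e'')" by simp
  qed
  with av show False
    unfolding avoids_def by blast
qed

lemma critical_embedding_right_of_one:
  assumes av: "avoids P k l M m n"
    and emb: "is_embedding P k l (flip M (i,x)) m n \<phi>" and \<phi>e: "\<phi> e = (i,x)" and e: "e \<in> cells k l"
    and y: "M i y" "y \<in> {1..n}" "y < x"
    and e': "e' \<in> cells k l" "snd e \<le> snd e'"
  shows "y < snd (\<phi> e')"
proof (rule ccontr)
  assume "\<not> y < snd (\<phi> e')"
  have "is_embedding P k l M m n (\<phi>(e := (i,y)))"
  proof (rule embedding_move_entry[OF emb \<phi>e e y(1,2)])
    fix e'' assume "e'' \<in> cells k l" "snd e'' < snd e"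
    then have "snd (\<phi> e'') < snd (\<phi> e')"
      using emb e' unfolding is_embedding_def by force
    with \<open>\<not> y < snd (\<phi> e')\<close> show "snd (\<phi> e'') < y" by simp
  next
    fix e'' assume "e'' \<in> cells k l" "snd e < snd e''"
    then show "y < snd (\<phi> e'')"
      using emb e \<phi>e y(3) unfolding is_embedding_def by fastforce
  qed
  with av show False
    unfolding avoids_def by blast
qed

lemma zero_run_end_unique:
  assumes "zero_run M m n i a b" "zero_run M m n i a b'"
  shows "b = b'"
proof (rule ccontr)
  assume "b \<noteq> b'"
  then consider "b < b'" | "b' < b" by linarith
  then show False
    using assms unfolding zero_run_def by cases (auto simp: Suc_le_eq)
qed

lemma zero_run_before:
  assumes "zero_run M m n i a b" "zero_run M m n i a' b'" "a < a'"
  shows "b + 1 < a' \<and> M i (b + 1)"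
proof -
  have zeros: "\<forall>j\<in>{a..b}. \<not> M i j" "\<forall>j\<in>{a'..b'}. \<not> M i j"
    and "a' \<le> b'" "b = n \<or> M i (b + 1)" "b' \<le> n" "M i (a' - 1)"
    using assms unfolding zero_run_def by auto
  have "b < a'"
  proof (rule ccontr)
    assume "\<not> b < a'"
    then have "a' - 1 \<in> {a..b}" using assms(3) by auto
    with zeros(1) \<open>M i (a' - 1)\<close> show False by blast
  qed
  then have "M i (b + 1)"
    using \<open>b = n \<or> M i (b + 1)\<close> \<open>a' \<le> b'\<close> \<open>b' \<le> n\<close> by auto
  moreover have "b + 1 \<noteq> a'"
    using zeros(2) \<open>a' \<le> b'\<close> calculation by auto
  ultimately show ?thesis
    using \<open>b < a'\<close> by auto
qed

lemma zero_run_start_unique: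
  assumes "zero_run M m n i a b" "zero_run M m n i a' b"
  shows "a = a'"
proof -
  have "a \<le> b" "a' \<le> b"
    using assms unfolding zero_run_def by auto
  then show ?thesis
    using zero_run_before[OF assms] zero_run_before[OF assms(2,1)]
    by (cases a a' rule: linorder_cases) auto
qed

lemma card_zero_runs_le_ones_between:
  assumes fin: "finite R" and runs: "\<And>a b. (a,b) \<in> R \<Longrightarrow> zero_run M m n i a b"
    and first: "(a0,b0) \<in> R" and last: "(a1,b1) \<in> R"
    and between: "\<And>a b. (a,b) \<in> R \<Longrightarrow> a0 \<le> a \<and> a \<le> a1"
  shows "card R \<le> card {y. b0 < y \<and> y < a1 \<and> M i y} + 1"
proof -
  let ?S = "{y. b0 < y \<and> y < a1 \<and> M i y}"
  have inj: "inj_on (\<lambda>(a,b). b + 1) (R - {(a1,b1)})"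
  proof (rule inj_onI)
    fix p q assume "p \<in> R - {(a1,b1)}" "q \<in> R - {(a1,b1)}" "(\<lambda>(a,b). b + 1) p = (\<lambda>(a,b). b + 1) q"
    then show "p = q"
      by (cases p, cases q) (auto intro: zero_run_start_unique runs)
  qed
  have "b + 1 \<in> ?S" if ab: "(a,b) \<in> R" "(a,b) \<noteq> (a1,b1)" for a b
  proof -
    have "a \<noteq> a1"
      using zero_run_end_unique runs ab last by blast
    then have "b + 1 < a1 \<and> M i (b + 1)"
      using zero_run_before runs ab(1) last between by (metis le_neq_implies_less)
    moreover have "b0 \<le> b"
    proof (cases "a0 = a")
      case True
      then show ?thesis
        using zero_run_end_unique runs first ab(1) by blast
    next
      case False
      then have "b0 + 1 < a"
        using zero_run_before runs first ab(1) between by (metis le_neq_implies_less)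
      then show ?thesis
        using runs[OF ab(1)] unfolding zero_run_def by simp
    qed
    ultimately show "b + 1 \<in> ?S" by simp
  qed
  then have "(\<lambda>(a,b). b + 1) ` (R - {(a1,b1)}) \<subseteq> ?S"
    by auto
  moreover have "finite ?S"
    by (rule finite_subset[of _ "{..<a1}"]) auto
  ultimately have "card (R - {(a1,b1)}) \<le> card ?S"
    using card_inj_on_le[OF inj] by blast
  then show ?thesis
    using fin last by simp
qed

lemma finite_critical_runs: "finite (critical_runs P k l e M m n i)"
  by (rule finite_subset[of _ "{1..n} \<times> {1..n}"]) (auto simp: critical_runs_def zero_run_def)

lemma many_critical_runs_ones_between:
  assumes "N < card (critical_runs P k l e M m n i)"
  obtains xs xt where "critical P k l e M m n (i,xs)" "critical P k l e M m n (i,xt)"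
    and "N \<le> card {y. xs < y \<and> y < xt \<and> M i y}"
proof -
  let ?R = "critical_runs P k l e M m n i"
  have fin: "finite (fst ` ?R)" and ne: "fst ` ?R \<noteq> {}"
    using finite_critical_runs assms by auto
  obtain b0 where first: "(Min (fst ` ?R), b0) \<in> ?R"
    using Min_in[OF fin ne] by auto
  obtain b1 where last: "(Max (fst ` ?R), b1) \<in> ?R"
    using Max_in[OF fin ne] by auto
  let ?a0 = "Min (fst ` ?R)" and ?a1 = "Max (fst ` ?R)"
  obtain xs xt where xs: "xs \<in> {?a0..b0}" "critical P k l e M m n (i,xs)"
    and xt: "xt \<in> {?a1..b1}" "critical P k l e M m n (i,xt)"
    using first last unfolding critical_runs_def by blast
  have "?a0 \<le> a \<and> a \<le> ?a1" if "(a,b) \<in> ?R" for a b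
  proof -
    have "a \<in> fst ` ?R" using that by force
    then show ?thesis using fin by simp
  qed
  then have "card ?R \<le> card {y. b0 < y \<and> y < ?a1 \<and> M i y} + 1"
    using finite_critical_runs first last
    by (intro card_zero_runs_le_ones_between) (auto simp: critical_runs_def)
  also have "card {y. b0 < y \<and> y < ?a1 \<and> M i y} \<le> card {y. xs < y \<and> y < xt \<and> M i y}"
    using xs(1) xt(1) by (intro card_mono) (auto intro: finite_subset[of _ "{..<xt}"])
  finally show thesis
    using that xs(2) xt(2) assms by simp
qed

lemma ex_strict_mono_on_image_subset:
  assumes "finite S" "card {c1..c2} \<le> card S"
  obtains Y :: "nat \<Rightarrow> 'a::linorder" where "strict_mono_on {c1..c2} Y" "Y ` {c1..c2} \<subseteq> S"
proof
  let ?xs = "sorted_list_of_set S"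
  have len: "b - c1 < length ?xs" if "b \<in> {c1..c2}" for b
    using that assms by auto
  show "strict_mono_on {c1..c2} (\<lambda>b. ?xs ! (b - c1))"
  proof (rule strict_mono_onI)
    fix x y assume "x \<in> {c1..c2}" "y \<in> {c1..c2}" "x < y"
    then have "x - c1 < y - c1" "y - c1 < length ?xs"
      using len by auto
    then show "?xs ! (x - c1) < ?xs ! (y - c1)"
      by (rule sorted_wrt_nth_less[OF strict_sorted_list_of_set])
  qed
  show "(\<lambda>b. ?xs ! (b - c1)) ` {c1..c2} \<subseteq> S"
    using nth_mem[OF len] set_sorted_list_of_set[OF assms(1)] by auto
qed

(* Taking the minimum above row q and the maximum below it keeps the rows increasing,
   whichever of the two choices row q makes. *)
definition blend_rows :: "(nat \<times> nat \<Rightarrow> nat) \<Rightarrow> (nat \<times> nat \<Rightarrow> nat) \<Rightarrow> nat \<Rightarrow> nat \<Rightarrow> nat \<times> nat \<Rightarrow> nat" where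
  "blend_rows \<rho>s \<rho>t c q = (\<lambda>(a,b).
     if a = q then (if b \<le> c then \<rho>s (a,b) else \<rho>t (a,b))
     else if a < q then min (\<rho>s (a,b)) (\<rho>t (a,b)) else max (\<rho>s (a,b)) (\<rho>t (a,b)))"

lemma blend_rows_cases: "blend_rows \<rho>s \<rho>t c q e = \<rho>s e \<or> blend_rows \<rho>s \<rho>t c q e = \<rho>t e"
  by (auto simp: blend_rows_def min_def max_def split: prod.splits)

lemma rows_increasing_blend_rows:
  assumes "rows_increasing C \<rho>s" "rows_increasing C \<rho>t"
  shows "rows_increasing C (blend_rows \<rho>s \<rho>t c q)"
  using assms unfolding rows_increasing_def
  by (fastforce simp: blend_rows_def min_def max_def split: prod.splits)

(* The three types of the theorem are combinations of these alternatives for the rows above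
   and the rows below r; every combination suffices. *)
definition row_mergeable :: "bmat \<Rightarrow> (nat \<times> nat) set \<Rightarrow> nat \<Rightarrow> nat \<Rightarrow> bool" where
  "row_mergeable P A c1 c2 \<longleftrightarrow>
     (\<exists>q. \<forall>(a,b)\<in>A. P a b \<longrightarrow> a = q) \<or>
     (\<forall>(a,b)\<in>A. P a b \<longrightarrow> b \<le> c1) \<or> (\<forall>(a,b)\<in>A. P a b \<longrightarrow> c2 \<le> b)"

lemma row_mergeableE:
  assumes "row_mergeable P A c1 c2" "c1 < c2" "rows_increasing A \<rho>s" "rows_increasing A \<rho>t"
  obtains \<rho> where "\<forall>e\<in>A. \<rho> e = \<rho>s e \<or> \<rho> e = \<rho>t e" "rows_increasing A \<rho>"
    "\<forall>(a,b)\<in>A. P a b \<longrightarrow> (b \<le> c1 \<longrightarrow> \<rho> (a,b) = \<rho>s (a,b)) \<and> (c2 \<le> b \<longrightarrow> \<rho> (a,b) = \<rho>t (a,b))"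
  using assms(1) unfolding row_mergeable_def
proof (elim disjE exE)
  fix q assume "\<forall>(a,b)\<in>A. P a b \<longrightarrow> a = q"
  then show thesis
    using that[of "blend_rows \<rho>s \<rho>t c1 q"] blend_rows_cases rows_increasing_blend_rows assms(2-4)
    by (fastforce simp: blend_rows_def)
qed (use that assms(2-4) in fastforce)+

definition left_glued :: "nat \<Rightarrow> nat \<Rightarrow> nat \<times> nat \<Rightarrow> bool" where
  "left_glued r c1 = (\<lambda>(a,b). b < c1 \<or> b = c1 \<and> a \<noteq> r)"

definition right_glued :: "nat \<Rightarrow> nat \<Rightarrow> nat \<times> nat \<Rightarrow> bool" where
  "right_glued r c2 = (\<lambda>(a,b). c2 < b \<or> b = c2 \<and> a \<noteq> r)"

definition glue_cols :: "(nat \<times> nat \<Rightarrow> nat) \<Rightarrow> (nat \<times> nat \<Rightarrow> nat) \<Rightarrow> (nat \<Rightarrow> nat) \<Rightarrow> nat \<Rightarrow> nat \<Rightarrow> nat \<Rightarrow> nat \<times> nat \<Rightarrow> nat" where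
  "glue_cols \<gamma>s \<gamma>t Y r c1 c2 e =
     (if left_glued r c1 e then \<gamma>s e else if right_glued r c2 e then \<gamma>t e else Y (snd e))"

lemma left_right_glued_disjoint: "c1 < c2 \<Longrightarrow> \<not> (left_glued r c1 e \<and> right_glued r c2 e)"
  by (auto simp: left_glued_def right_glued_def split: prod.splits)

lemma glue_cols_mem: "glue_cols \<gamma>s \<gamma>t Y r c1 c2 e \<in> {\<gamma>s e, \<gamma>t e} \<union> Y ` {c1..c2}"
  by (auto simp: glue_cols_def left_glued_def right_glued_def split: prod.splits)

lemma glue_cols_row: "b \<in> {c1..c2} \<Longrightarrow> c1 < c2 \<Longrightarrow> glue_cols \<gamma>s \<gamma>t Y r c1 c2 (r,b) = Y b"
  by (auto simp: glue_cols_def left_glued_def right_glued_def)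

lemma glue_cols_off_row:
  "a \<noteq> r \<Longrightarrow> b \<le> c1 \<Longrightarrow> glue_cols \<gamma>s \<gamma>t Y r c1 c2 (a,b) = \<gamma>s (a,b)"
  "a \<noteq> r \<Longrightarrow> c1 < c2 \<Longrightarrow> c2 \<le> b \<Longrightarrow> glue_cols \<gamma>s \<gamma>t Y r c1 c2 (a,b) = \<gamma>t (a,b)"
  by (auto simp: glue_cols_def left_glued_def right_glued_def)

lemma glue_cols_bounds:
  assumes Y: "strict_mono_on {c1..c2} Y" and "c1 < c2"
    and s_left: "\<forall>e\<in>C. snd e \<le> c1 \<longrightarrow> \<gamma>s e < Y c1"
    and t_right: "\<forall>e\<in>C. c2 \<le> snd e \<longrightarrow> Y c2 < \<gamma>t e"
    and e: "e \<in> C"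
  shows "left_glued r c1 e \<Longrightarrow> glue_cols \<gamma>s \<gamma>t Y r c1 c2 e < Y c1"
    and "right_glued r c2 e \<Longrightarrow> Y c2 < glue_cols \<gamma>s \<gamma>t Y r c1 c2 e"
    and "\<not> left_glued r c1 e \<Longrightarrow> \<not> right_glued r c2 e \<Longrightarrow>
      glue_cols \<gamma>s \<gamma>t Y r c1 c2 e = Y (snd e) \<and> snd e \<in> {c1..c2} \<and> Y c1 \<le> Y (snd e) \<and> Y (snd e) \<le> Y c2"
proof -
  from left_right_glued_disjoint[OF \<open>c1 < c2\<close>]
  show "left_glued r c1 e \<Longrightarrow> glue_cols \<gamma>s \<gamma>t Y r c1 c2 e < Y c1"
    and "right_glued r c2 e \<Longrightarrow> Y c2 < glue_cols \<gamma>s \<gamma>t Y r c1 c2 e"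
    using s_left t_right e by (auto simp: glue_cols_def left_glued_def right_glued_def split: prod.splits)
  assume "\<not> left_glued r c1 e" "\<not> right_glued r c2 e"
  then have "snd e \<in> {c1..c2}"
    by (auto simp: left_glued_def right_glued_def split: prod.splits)
  then show "glue_cols \<gamma>s \<gamma>t Y r c1 c2 e = Y (snd e) \<and> snd e \<in> {c1..c2} \<and> Y c1 \<le> Y (snd e) \<and> Y (snd e) \<le> Y c2"
    using \<open>\<not> left_glued r c1 e\<close> \<open>\<not> right_glued r c2 e\<close> strict_mono_on_less_eq[OF Y] \<open>c1 < c2\<close>
    by (simp add: glue_cols_def)
qed

lemma cols_increasing_glue_cols:
  assumes inc: "cols_increasing C \<gamma>s" "cols_increasing C \<gamma>t" and Y: "strict_mono_on {c1..c2} Y"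
    and "c1 < c2"
    and s_left: "\<forall>e\<in>C. snd e \<le> c1 \<longrightarrow> \<gamma>s e < Y c1"
    and t_right: "\<forall>e\<in>C. c2 \<le> snd e \<longrightarrow> Y c2 < \<gamma>t e"
  shows "cols_increasing C (glue_cols \<gamma>s \<gamma>t Y r c1 c2)"
  unfolding cols_increasing_def
proof (intro ballI impI)
  fix e e' assume e: "e \<in> C" and e': "e' \<in> C" and less: "snd e < snd e'"
  let ?g = "glue_cols \<gamma>s \<gamma>t Y r c1 c2"
  note bounds = glue_cols_bounds[OF Y \<open>c1 < c2\<close> s_left t_right]
  have "Y c1 < Y c2"
    using strict_mono_onD[OF Y] \<open>c1 < c2\<close> by simp
  have "left_glued r c1 e' \<Longrightarrow> left_glued r c1 e" "right_glued r c2 e \<Longrightarrow> right_glued r c2 e'"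
    using less by (auto simp: left_glued_def right_glued_def split: prod.splits)
  then consider "left_glued r c1 e" "left_glued r c1 e'" | "right_glued r c2 e" "right_glued r c2 e'"
    | "left_glued r c1 e" "\<not> left_glued r c1 e'" | "\<not> left_glued r c1 e" "right_glued r c2 e'" "\<not> right_glued r c2 e"
    | "\<not> left_glued r c1 e" "\<not> right_glued r c2 e" "\<not> left_glued r c1 e'" "\<not> right_glued r c2 e'"
    by blast
  then show "?g e < ?g e'"
  proof cases
    case 1
    then show ?thesis using cols_increasingD[OF inc(1) e e' less] by (simp add: glue_cols_def)
  next
    case 2
    then have "\<not> left_glued r c1 e" "\<not> left_glued r c1 e'"
      using left_right_glued_disjoint[OF \<open>c1 < c2\<close>] by blast+
    with 2 show ?thesis using cols_increasingD[OF inc(2) e e' less] by (simp add: glue_cols_def)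
  next
    case 3
    then show ?thesis
      using bounds(1)[OF e, of r] bounds(2,3)[OF e', of r] \<open>Y c1 < Y c2\<close>
      by (cases "right_glued r c2 e'") auto
  next
    case 4
    then show ?thesis using bounds(2)[OF e', of r] bounds(3)[OF e, of r] by auto
  next
    case 5
    then show ?thesis
      using bounds(3)[OF e, of r] bounds(3)[OF e', of r] strict_mono_onD[OF Y] less by auto
  qed
qed

lemma rows_increasing_split_at:
  assumes "rows_increasing {e\<in>C. fst e < r} U" "rows_increasing {e\<in>C. r < fst e} D"
    and "\<forall>e\<in>C. fst e < r \<longrightarrow> U e < i" "\<forall>e\<in>C. r < fst e \<longrightarrow> i < D e"
  shows "rows_increasing C (\<lambda>e. if fst e = r then i else if fst e < r then U e else D e)"
  unfolding rows_increasing_def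
proof (intro ballI impI)
  fix e e' assume "e \<in> C" "e' \<in> C" "fst e < fst e'"
  then show "(if fst e = r then i else if fst e < r then U e else D e)
    < (if fst e' = r then i else if fst e' < r then U e' else D e')"
    using rows_increasingD[OF assms(1), of e e'] rows_increasingD[OF assms(2), of e e'] assms(3,4)
    by (cases "fst e < r"; cases "fst e' < r") (auto intro: less_trans)
qed

lemma row_mergeable_Collect_iff:
  "row_mergeable P {e\<in>C. R (fst e)} c1 c2 \<longleftrightarrow>
     (\<exists>q. \<forall>(a,b)\<in>C. P a b \<and> R a \<longrightarrow> a = q) \<or>
     (\<forall>(a,b)\<in>C. P a b \<and> R a \<longrightarrow> b \<le> c1) \<or> (\<forall>(a,b)\<in>C. P a b \<and> R a \<longrightarrow> c2 \<le> b)"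
  by (auto simp: row_mergeable_def)

locale interval_row_pattern =
  fixes P :: bmat and k l r c1 c2 :: nat
  assumes r_range: "r \<in> {1..k}"
    and c_range: "1 \<le> c1" "c1 < c2" "c2 \<le> l"
    and row_r: "\<forall>j\<in>{1..l}. P r j \<longrightarrow> c1 \<le> j \<and> j \<le> c2"
    and mid_cols: "\<forall>i\<in>{1..k}. \<forall>c\<in>{c1<..<c2}. P i c \<longrightarrow> i = r"
    and above: "row_mergeable P {e\<in>cells k l. fst e < r} c1 c2"
    and below: "row_mergeable P {e\<in>cells k l. r < fst e} c1 c2"
begin

lemma merged_rowsE:
  assumes s: "is_embedding P k l M m n \<phi>s" and t: "is_embedding P k l M' m n \<phi>t"
    and e: "(r,j0) \<in> cells k l" and row_i: "fst (\<phi>s (r,j0)) = i" "fst (\<phi>t (r,j0)) = i"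
  obtains \<rho> where "rows_increasing (cells k l) \<rho>"
    "\<forall>e\<in>cells k l. \<rho> e \<in> {i, fst (\<phi>s e), fst (\<phi>t e)}" "\<forall>b. \<rho> (r,b) = i"
    "\<forall>(a,b)\<in>cells k l. P a b \<and> a \<noteq> r \<longrightarrow>
       (b \<le> c1 \<longrightarrow> \<rho> (a,b) = fst (\<phi>s (a,b))) \<and> (c2 \<le> b \<longrightarrow> \<rho> (a,b) = fst (\<phi>t (a,b)))"
proof -
  let ?A = "{e\<in>cells k l. fst e < r}" and ?B = "{e\<in>cells k l. r < fst e}"
  have s_rows: "rows_increasing (cells k l) (\<lambda>e. fst (\<phi>s e))"
    and t_rows: "rows_increasing (cells k l) (\<lambda>e. fst (\<phi>t e))"
    using s t by (simp_all add: is_embedding_iff)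
  have rows: "rows_increasing X (\<lambda>e. fst (\<phi>s e))" "rows_increasing X (\<lambda>e. fst (\<phi>t e))"
    if "X \<subseteq> cells k l" for X
    using rows_increasing_subset s_rows t_rows that by blast+
  have above_i: "fst (\<phi>s e) < i \<and> fst (\<phi>t e) < i" if "e \<in> ?A" for e
    using rows_increasingD[OF s_rows, of e "(r,j0)"] rows_increasingD[OF t_rows, of e "(r,j0)"]
      that e row_i by auto
  have below_i: "i < fst (\<phi>s e) \<and> i < fst (\<phi>t e)" if "e \<in> ?B" for e
    using rows_increasingD[OF s_rows, of "(r,j0)" e] rows_increasingD[OF t_rows, of "(r,j0)" e]
      that e row_i by auto
  obtain U where U: "\<forall>e\<in>?A. U e = fst (\<phi>s e) \<or> U e = fst (\<phi>t e)" "rows_increasing ?A U"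
    "\<forall>(a,b)\<in>?A. P a b \<longrightarrow> (b \<le> c1 \<longrightarrow> U (a,b) = fst (\<phi>s (a,b))) \<and> (c2 \<le> b \<longrightarrow> U (a,b) = fst (\<phi>t (a,b)))"
    using row_mergeableE[OF above c_range(2) rows[of ?A]] by blast
  obtain D where D: "\<forall>e\<in>?B. D e = fst (\<phi>s e) \<or> D e = fst (\<phi>t e)" "rows_increasing ?B D"
    "\<forall>(a,b)\<in>?B. P a b \<longrightarrow> (b \<le> c1 \<longrightarrow> D (a,b) = fst (\<phi>s (a,b))) \<and> (c2 \<le> b \<longrightarrow> D (a,b) = fst (\<phi>t (a,b)))"
    using row_mergeableE[OF below c_range(2) rows[of ?B]] by blast
  let ?\<rho> = "\<lambda>e. if fst e = r then i else if fst e < r then U e else D e"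
  show thesis
  proof (rule that[of ?\<rho>])
    show "rows_increasing (cells k l) ?\<rho>"
      using U(1,2) D(1,2) above_i below_i by (intro rows_increasing_split_at) (auto, metis+)
    show "\<forall>e\<in>cells k l. ?\<rho> e \<in> {i, fst (\<phi>s e), fst (\<phi>t e)}"
    proof
      fix e assume "e \<in> cells k l"
      then show "?\<rho> e \<in> {i, fst (\<phi>s e), fst (\<phi>t e)}"
        using bspec[OF U(1), of e] bspec[OF D(1), of e] by auto
    qed
    show "\<forall>(a,b)\<in>cells k l. P a b \<and> a \<noteq> r \<longrightarrow>
       (b \<le> c1 \<longrightarrow> ?\<rho> (a,b) = fst (\<phi>s (a,b))) \<and> (c2 \<le> b \<longrightarrow> ?\<rho> (a,b) = fst (\<phi>t (a,b)))"
      using U(3) D(3) by auto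
  qed simp
qed

lemma glued_map_one:
  assumes e: "(r,j0) \<in> cells k l"
    and s: "is_embedding P k l (flip M (i,xs)) m n \<phi>s" "\<phi>s (r,j0) = (i,xs)"
    and t: "is_embedding P k l (flip M (i,xt)) m n \<phi>t" "\<phi>t (r,j0) = (i,xt)"
    and Y: "\<forall>b\<in>{c1..c2}. M i (Y b)"
    and \<rho>: "\<forall>b. \<rho> (r,b) = i"
      "\<forall>(a,b)\<in>cells k l. P a b \<and> a \<noteq> r \<longrightarrow>
         (b \<le> c1 \<longrightarrow> \<rho> (a,b) = fst (\<phi>s (a,b))) \<and> (c2 \<le> b \<longrightarrow> \<rho> (a,b) = fst (\<phi>t (a,b)))"
    and ab: "(a,b) \<in> cells k l" "P a b"
  shows "M (\<rho> (a,b)) (glue_cols (\<lambda>e. snd (\<phi>s e)) (\<lambda>e. snd (\<phi>t e)) Y r c1 c2 (a,b))"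
proof (cases "a = r")
  case True
  then have "b \<in> {c1..c2}"
    using row_r ab by (auto simp: cells_def)
  then show ?thesis
    using True Y \<rho>(1) glue_cols_row c_range(2) by simp
next
  case False
  have "b \<le> c1 \<or> c2 \<le> b"
    using mid_cols ab False by (fastforce simp: cells_def)
  then show ?thesis
  proof
    assume "b \<le> c1"
    then show ?thesis
      using \<rho>(2) ab False glue_cols_off_row(1) embedding_flip_one[OF s(1) s(2) e ab(1)] by auto
  next
    assume "c2 \<le> b"
    then show ?thesis
      using \<rho>(2) ab False c_range(2) glue_cols_off_row(2) embedding_flip_one[OF t(1) t(2) e ab(1)] by auto
  qed
qed

lemma glued_embedding:
  assumes j0: "j0 \<in> {c1..c2}"
    and s: "is_embedding P k l (flip M (i,xs)) m n \<phi>s" "\<phi>s (r,j0) = (i,xs)"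
    and t: "is_embedding P k l (flip M (i,xt)) m n \<phi>t" "\<phi>t (r,j0) = (i,xt)"
    and Y: "strict_mono_on {c1..c2} Y" "\<forall>b\<in>{c1..c2}. M i (Y b) \<and> Y b \<in> {1..n}"
    and s_left: "\<forall>e\<in>cells k l. snd e \<le> c1 \<longrightarrow> snd (\<phi>s e) < Y c1"
    and t_right: "\<forall>e\<in>cells k l. c2 \<le> snd e \<longrightarrow> Y c2 < snd (\<phi>t e)"
  shows "\<exists>\<psi>. is_embedding P k l M m n \<psi>"
proof -
  have e: "(r,j0) \<in> cells k l"
    using r_range c_range j0 by (auto simp: cells_def)
  obtain \<rho> where \<rho>: "rows_increasing (cells k l) \<rho>"
    "\<forall>e\<in>cells k l. \<rho> e \<in> {i, fst (\<phi>s e), fst (\<phi>t e)}" "\<forall>b. \<rho> (r,b) = i"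
    "\<forall>(a,b)\<in>cells k l. P a b \<and> a \<noteq> r \<longrightarrow>
       (b \<le> c1 \<longrightarrow> \<rho> (a,b) = fst (\<phi>s (a,b))) \<and> (c2 \<le> b \<longrightarrow> \<rho> (a,b) = fst (\<phi>t (a,b)))"
    using merged_rowsE[OF s(1) t(1) e] s(2) t(2) by auto
  define \<gamma> where "\<gamma> = glue_cols (\<lambda>e. snd (\<phi>s e)) (\<lambda>e. snd (\<phi>t e)) Y r c1 c2"
  have "is_embedding P k l M m n (\<lambda>e. (\<rho> e, \<gamma> e))"
    unfolding is_embedding_iff fst_conv snd_conv
  proof (intro conjI)
    show "cols_increasing (cells k l) \<gamma>"
      unfolding \<gamma>_def using s(1) t(1) Y(1) c_range(2) s_left t_right
      by (intro cols_increasing_glue_cols) (auto simp: is_embedding_iff)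
    show "\<forall>(a,b)\<in>cells k l. P a b \<longrightarrow> M (\<rho> (a,b)) (\<gamma> (a,b))"
      unfolding \<gamma>_def using glued_map_one[OF e s t _ \<rho>(3,4)] Y(2) by blast
    show "(\<lambda>e. (\<rho> e, \<gamma> e)) ` cells k l \<subseteq> cells m n"
    proof (rule image_subsetI)
      fix e assume e': "e \<in> cells k l"
      have "\<phi>s e \<in> cells m n" "\<phi>t e \<in> cells m n" "\<phi>s (r,j0) \<in> cells m n"
        using s(1) t(1) e e' by (auto simp: is_embedding_iff)
      then have "{i, fst (\<phi>s e), fst (\<phi>t e)} \<subseteq> {1..m}"
        and "{snd (\<phi>s e), snd (\<phi>t e)} \<union> Y ` {c1..c2} \<subseteq> {1..n}"
        using s(2) Y(2) by (auto simp: cells_def mem_Times_iff)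
      moreover have "\<rho> e \<in> {i, fst (\<phi>s e), fst (\<phi>t e)}"
        using \<rho>(2) e' by blast
      moreover have "\<gamma> e \<in> {snd (\<phi>s e), snd (\<phi>t e)} \<union> Y ` {c1..c2}"
        unfolding \<gamma>_def by (rule glue_cols_mem)
      ultimately have "\<rho> e \<in> {1..m}" "\<gamma> e \<in> {1..n}"
        by (meson subsetD)+
      then show "(\<rho> e, \<gamma> e) \<in> cells m n"
        by (simp add: cells_def)
    qed
  qed (use \<rho>(1) in simp)
  then show ?thesis by blast
qed

lemma few_ones_between_critical_entries:
  assumes av: "avoids P k l M m n" and j0: "j0 \<in> {c1..c2}"
    and xs: "critical P k l (r,j0) M m n (i,xs)" and xt: "critical P k l (r,j0) M m n (i,xt)"
  shows "card {y. xs < y \<and> y < xt \<and> M i y} < card {c1..c2}"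
proof (rule ccontr)
  let ?S = "{y. xs < y \<and> y < xt \<and> M i y}"
  assume "\<not> card ?S < card {c1..c2}"
  moreover have "finite ?S"
    by (rule finite_subset[of _ "{..<xt}"]) auto
  ultimately obtain Y where Y: "strict_mono_on {c1..c2} Y" "Y ` {c1..c2} \<subseteq> ?S"
    using ex_strict_mono_on_image_subset by (metis not_less)
  obtain \<phi>s where s: "is_embedding P k l (flip M (i,xs)) m n \<phi>s" "\<phi>s (r,j0) = (i,xs)"
    using xs unfolding critical_def by auto
  obtain \<phi>t where t: "is_embedding P k l (flip M (i,xt)) m n \<phi>t" "\<phi>t (r,j0) = (i,xt)"
    using xt unfolding critical_def by auto
  have e: "(r,j0) \<in> cells k l"
    using r_range c_range j0 by (auto simp: cells_def)
  have "xt \<le> n"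
    using xt unfolding critical_def by (simp add: cells_def)
  then have Y_ones: "\<forall>b\<in>{c1..c2}. M i (Y b) \<and> Y b \<in> {1..n} \<and> xs < Y b \<and> Y b < xt"
    using Y(2) by fastforce
  have "\<forall>e\<in>cells k l. snd e \<le> c1 \<longrightarrow> snd (\<phi>s e) < Y c1"
    using critical_embedding_left_of_one[OF av s(1) s(2) e] Y_ones c_range(2) j0 by auto
  moreover have "\<forall>e\<in>cells k l. c2 \<le> snd e \<longrightarrow> Y c2 < snd (\<phi>t e)"
    using critical_embedding_right_of_one[OF av t(1) t(2) e] Y_ones c_range(2) j0 by auto
  ultimately have "\<exists>\<psi>. is_embedding P k l M m n \<psi>"
    using glued_embedding[OF j0 s t Y(1)] Y_ones by blast
  with av show False
    unfolding avoids_def by blast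
qed

lemma card_critical_runs_le:
  assumes "avoids P k l M m n" "j0 \<in> {c1..c2}"
  shows "card (critical_runs P k l (r,j0) M m n i) \<le> card {c1..c2}"
proof (rule ccontr)
  assume "\<not> ?thesis"
  then have "card {c1..c2} < card (critical_runs P k l (r,j0) M m n i)"
    by simp
  then obtain xs xt where crit: "critical P k l (r,j0) M m n (i,xs)" "critical P k l (r,j0) M m n (i,xt)"
    and "card {c1..c2} \<le> card {y. xs < y \<and> y < xt \<and> M i y}"
    by (rule many_critical_runs_ones_between)
  then show False
    using few_ones_between_critical_entries[OF assms crit] by simp
qed

end

theorem lemma3p10:
  fixes P :: bmat and k l r c1 c2 :: nat
  assumes r: "1 \<le> r" "r \<le> k"
    and c: "1 \<le> c1" "c1 < c2" "c2 \<le> l"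
    and row_r: "\<forall>j\<in>{1..l}. P r j \<longrightarrow> c1 \<le> j \<and> j \<le> c2"
    and mid_cols: "\<forall>i\<in>{1..k}. \<forall>c\<in>{c1<..<c2}. P i c \<longrightarrow> i = r"
    and types:
      "(\<exists>r1 r2. (\<forall>(i,j)\<in>cells k l. P i j \<and> i < r \<longrightarrow> i = r1) \<and>
                (\<forall>(i,j)\<in>cells k l. P i j \<and> r < i \<longrightarrow> i = r2))
       \<or> (\<exists>r1. (\<forall>(i,j)\<in>cells k l. P i j \<and> i < r \<longrightarrow> i = r1) \<and>
                (\<forall>(i,j)\<in>cells k l. P i j \<and> r < i \<longrightarrow> c2 \<le> j))
       \<or> ((\<forall>(i,j)\<in>cells k l. P i j \<and> i < r \<longrightarrow> j \<le> c1) \<and>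
          (\<forall>(i,j)\<in>cells k l. P i j \<and> r < i \<longrightarrow> c2 \<le> j))"
  shows "\<forall>j\<in>{c1..c2}. P r j \<longrightarrow> row_bounding P k l (r, j)"
proof -
  have "row_mergeable P {e\<in>cells k l. fst e < r} c1 c2 \<and> row_mergeable P {e\<in>cells k l. r < fst e} c1 c2"
    using types unfolding row_mergeable_Collect_iff[where R = "\<lambda>a. a < r"]
      row_mergeable_Collect_iff[where R = "\<lambda>a. r < a"] by blast
  then interpret interval_row_pattern P k l r c1 c2
    using r c row_r mid_cols by unfold_locales auto
  show ?thesis
    unfolding row_bounding_def using card_critical_runs_le by blast
qed

end
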